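(* Let $G_1$ and $G_2$ be connected graphs, each with at least two vertices. Then $$\chi_d^t(G_1\star G_2)\leq \chi_d^t(G_1)+\chi_d^t(G_2).$$
   Context: All graphs are simple and finite. A total dominator coloring (TD-coloring) of a graph $G$ with no isolated vertex is a proper vertex coloring of $G$ in which every vertex of $G$ is adjacent to every vertex of some color class (a color class being the set of all vertices receiving a given color). The total dominator chromatic number (TDC-number) $\chi_d^t(G)$ is the minimum number of colors in a TD-coloring of $G$. The neighbourhood corona $G_1\star G_2$ of graphs $G_1$ and $G_2$ is the graph obtained by taking one copy of $G_1$ and $|V(G_1)|$ copies of $G_2$, and, for each $i$, joining every neighbour (in $G_1$) of the $i$-th vertex of $G_1$ to every vertex of the $i$-th copy of $G_2$. *)

theory Defs
  imports Main
begin

definition simple_graph :: "'a set \<Rightarrow> ('a \<Rightarrow> 'a \<Rightarrow> bool) \<Rightarrow> bool" where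
  "simple_graph V E \<longleftrightarrow> finite V \<and> (\<forall>u v. E u v \<longrightarrow> u \<in> V \<and> v \<in> V)
     \<and> (\<forall>u v. E u v \<longrightarrow> E v u) \<and> (\<forall>v. \<not> E v v)"

definition connected_graph :: "'a set \<Rightarrow> ('a \<Rightarrow> 'a \<Rightarrow> bool) \<Rightarrow> bool" where
  "connected_graph V E \<longleftrightarrow> V \<noteq> {} \<and> (\<forall>u\<in>V. \<forall>v\<in>V. E\<^sup>*\<^sup>* u v)"

definition no_isolated :: "'a set \<Rightarrow> ('a \<Rightarrow> 'a \<Rightarrow> bool) \<Rightarrow> bool" where
  "no_isolated V E \<longleftrightarrow> (\<forall>v\<in>V. \<exists>u. E v u)"

definition proper_coloring :: "'a set \<Rightarrow> ('a \<Rightarrow> 'a \<Rightarrow> bool) \<Rightarrow> ('a \<Rightarrow> nat) \<Rightarrow> bool" where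
  "proper_coloring V E c \<longleftrightarrow> (\<forall>u v. E u v \<longrightarrow> c u \<noteq> c v)"

definition color_class :: "'a set \<Rightarrow> ('a \<Rightarrow> nat) \<Rightarrow> nat \<Rightarrow> 'a set" where
  "color_class V c j = {v\<in>V. c v = j}"

definition td_coloring :: "'a set \<Rightarrow> ('a \<Rightarrow> 'a \<Rightarrow> bool) \<Rightarrow> ('a \<Rightarrow> nat) \<Rightarrow> bool" where
  "td_coloring V E c \<longleftrightarrow> proper_coloring V E c \<and>
     (\<forall>v\<in>V. \<exists>j\<in>c ` V. \<forall>u\<in>color_class V c j. E v u)"

definition td_chromatic :: "'a set \<Rightarrow> ('a \<Rightarrow> 'a \<Rightarrow> bool) \<Rightarrow> nat" where
  "td_chromatic V E = (LEAST k. \<exists>c. td_coloring V E c \<and> card (c ` V) = k)"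

text \<open>Neighbourhood corona: vertices Inl v (copy of G1) and Inr (i, w) (vertex w of the
  i-th copy of G2, one copy for each vertex i of G1).\<close>
definition ncorona_V :: "'a set \<Rightarrow> 'b set \<Rightarrow> ('a + 'a \<times> 'b) set" where
  "ncorona_V V1 V2 = Inl ` V1 \<union> Inr ` (V1 \<times> V2)"

fun ncorona_E :: "('a \<Rightarrow> 'a \<Rightarrow> bool) \<Rightarrow> 'b set \<Rightarrow> ('b \<Rightarrow> 'b \<Rightarrow> bool)
    \<Rightarrow> ('a + 'a \<times> 'b) \<Rightarrow> ('a + 'a \<times> 'b) \<Rightarrow> bool" where
  "ncorona_E E1 V2 E2 (Inl u) (Inl v) = E1 u v"
| "ncorona_E E1 V2 E2 (Inl u) (Inr (i, w)) = (E1 u i \<and> w \<in> V2)"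
| "ncorona_E E1 V2 E2 (Inr (i, w)) (Inl u) = (E1 u i \<and> w \<in> V2)"
| "ncorona_E E1 V2 E2 (Inr (i, w)) (Inr (j, x)) = (i = j \<and> E2 w x)"

end

theory Submission
  imports Defs
begin

text \<open>Colour the copy of \<open>G\<^sub>1\<close> by a TD-coloring of \<open>G\<^sub>1\<close> and every copy of \<open>G\<^sub>2\<close> by a
  proper coloring of \<open>G\<^sub>2\<close> shifted past the colours of \<open>G\<^sub>1\<close>. The result is proper, since
  the only edges between the two kinds of vertices join differently shifted colours. It is a
  TD-coloring, since the classes of the \<open>G\<^sub>1\<close>-colours consist of vertices of the copy of
  \<open>G\<^sub>1\<close> only: a vertex \<open>v\<close> of \<open>G\<^sub>1\<close> keeps its dominated class, and a vertex of the copy of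
  \<open>G\<^sub>2\<close> attached to \<open>i\<close> is adjacent to every neighbour of \<open>i\<close>, hence to the class dominated
  by \<open>i\<close>.\<close>

lemma connected_graph_no_isolated:
  assumes "connected_graph V E" and "card V \<ge> 2"
  shows "no_isolated V E"
  unfolding no_isolated_def
proof
  fix v assume v: "v \<in> V"
  have "\<not> V \<subseteq> {v}"
  proof
    assume "V \<subseteq> {v}"
    then have "card V \<le> card {v}" by (rule card_mono[rotated]) simp
    with assms(2) show False by simp
  qed
  then obtain u where u: "u \<in> V" "u \<noteq> v" by blast
  have "E\<^sup>*\<^sup>* v u" using assms(1) v u(1) unfolding connected_graph_def by blast
  then show "\<exists>u. E v u" using u(2) by (cases rule: converse_rtranclpE) auto
qed

text \<open>An injective coloring: every class is a singleton, dominated by any neighbour.\<close>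
lemma td_coloring_exists:
  assumes "simple_graph V E" and "no_isolated V E"
  shows "\<exists>c. td_coloring V E c"
proof -
  have fin: "finite V" using assms(1) by (simp add: simple_graph_def)
  obtain f :: "_ \<Rightarrow> nat" where inj: "inj_on f V"
    using ex_bij_betw_finite_nat[OF fin] bij_betw_def by blast
  have ends: "u \<in> V" "v \<in> V" "u \<noteq> v" if "E u v" for u v
    using assms(1) that unfolding simple_graph_def by metis+
  have "td_coloring V E f"
    unfolding td_coloring_def proper_coloring_def
  proof (intro conjI allI impI ballI)
    fix u v assume "E u v"
    then show "f u \<noteq> f v" using ends inj by (meson inj_on_eq_iff)
  next
    fix v assume "v \<in> V"
    then obtain u where u: "E v u" using assms(2) unfolding no_isolated_def by blast
    then have "\<forall>x\<in>color_class V f (f u). E v x"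
      using ends inj unfolding color_class_def by (auto dest: inj_onD)
    then show "\<exists>j\<in>f ` V. \<forall>x\<in>color_class V f j. E v x" using ends(2)[OF u] by blast
  qed
  then show ?thesis by blast
qed

lemma td_chromatic_attained:
  assumes "\<exists>c. td_coloring V E c"
  shows "\<exists>c. td_coloring V E c \<and> card (c ` V) = td_chromatic V E"
  unfolding td_chromatic_def by (rule LeastI_ex) (use assms in blast)

lemma td_chromatic_le:
  assumes "td_coloring V E c"
  shows "td_chromatic V E \<le> card (c ` V)"
  unfolding td_chromatic_def by (rule Least_le) (use assms in blast)

definition ncorona_coloring ::
    "('a \<Rightarrow> nat) \<Rightarrow> ('b \<Rightarrow> nat) \<Rightarrow> nat \<Rightarrow> 'a + 'a \<times> 'b \<Rightarrow> nat" where
  "ncorona_coloring c1 c2 M = case_sum c1 (\<lambda>(i, w). M + c2 w)"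

lemma ncorona_coloring_simps [simp]:
  "ncorona_coloring c1 c2 M (Inl v) = c1 v"
  "ncorona_coloring c1 c2 M (Inr (i, w)) = M + c2 w"
  by (simp_all add: ncorona_coloring_def)

lemma ncorona_coloring_proper:
  assumes "simple_graph V1 E1" and "proper_coloring V1 E1 c1" and "proper_coloring V2 E2 c2"
    and below: "\<forall>v\<in>V1. c1 v < M"
  shows "proper_coloring (ncorona_V V1 V2) (ncorona_E E1 V2 E2) (ncorona_coloring c1 c2 M)"
  unfolding proper_coloring_def
proof (intro allI impI)
  fix x y assume e: "ncorona_E E1 V2 E2 x y"
  have ends: "u \<in> V1" if "E1 u v" for u v
    using assms(1) that unfolding simple_graph_def by blast
  show "ncorona_coloring c1 c2 M x \<noteq> ncorona_coloring c1 c2 M y"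
  proof (cases x; cases y)
    fix u v assume "x = Inl u" "y = Inl v"
    then show ?thesis using e assms(2) by (simp add: proper_coloring_def)
  next
    fix u p assume "x = Inl u" "y = Inr p"
    then show ?thesis using e ends below by (cases p) fastforce
  next
    fix p v assume "x = Inr p" "y = Inl v"
    then show ?thesis using e ends below by (cases p) fastforce
  next
    fix p q assume "x = Inr p" "y = Inr q"
    then show ?thesis using e assms(3) by (cases p; cases q) (auto simp: proper_coloring_def)
  qed
qed

lemma ncorona_coloring_td:
  assumes "simple_graph V1 E1" and "td_coloring V1 E1 c1" and "proper_coloring V2 E2 c2"
    and below: "\<forall>v\<in>V1. c1 v < M"
  shows "td_coloring (ncorona_V V1 V2) (ncorona_E E1 V2 E2) (ncorona_coloring c1 c2 M)"
  unfolding td_coloring_def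
proof (intro conjI ballI)
  let ?V = "ncorona_V V1 V2" and ?E = "ncorona_E E1 V2 E2" and ?c = "ncorona_coloring c1 c2 M"
  show "proper_coloring ?V ?E ?c"
    using ncorona_coloring_proper[OF assms(1) _ assms(3) below] assms(2)
    by (simp add: td_coloring_def)
  have classes: "color_class ?V ?c j = Inl ` color_class V1 c1 j" if "j \<in> c1 ` V1" for j
    using that below by (force simp: color_class_def ncorona_V_def)
  have sym: "E1 v u" if "E1 u v" for u v
    using assms(1) that unfolding simple_graph_def by blast
  fix x assume "x \<in> ?V"
  then obtain i where i: "i \<in> V1" and adj: "\<And>u. E1 i u \<Longrightarrow> ?E x (Inl u)"
    using sym by (auto simp: ncorona_V_def)
  obtain j where j: "j \<in> c1 ` V1" "\<forall>u\<in>color_class V1 c1 j. E1 i u"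
    using assms(2) i unfolding td_coloring_def by blast
  have "j \<in> ?c ` ?V" using j(1) by (force simp: ncorona_V_def)
  moreover have "\<forall>u\<in>color_class ?V ?c j. ?E x u"
    using j adj by (simp add: classes)
  ultimately show "\<exists>j\<in>?c ` ?V. \<forall>u\<in>color_class ?V ?c j. ?E x u" by blast
qed

lemma card_ncorona_coloring_image:
  assumes "finite V1" and "finite V2"
  shows "card (ncorona_coloring c1 c2 M ` ncorona_V V1 V2) \<le> card (c1 ` V1) + card (c2 ` V2)"
proof -
  have "ncorona_coloring c1 c2 M ` ncorona_V V1 V2 \<subseteq> c1 ` V1 \<union> (+) M ` c2 ` V2"
    by (auto simp: ncorona_V_def)
  then have "card (ncorona_coloring c1 c2 M ` ncorona_V V1 V2) \<le> card (c1 ` V1 \<union> (+) M ` c2 ` V2)"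
    by (rule card_mono[rotated]) (use assms in simp)
  also have "\<dots> \<le> card (c1 ` V1) + card ((+) M ` c2 ` V2)" by (rule card_Un_le)
  also have "\<dots> = card (c1 ` V1) + card (c2 ` V2)" by (simp add: card_image)
  finally show ?thesis .
qed

theorem theorem3:
  fixes V1 :: "'a set" and E1 :: "'a \<Rightarrow> 'a \<Rightarrow> bool"
    and V2 :: "'b set" and E2 :: "'b \<Rightarrow> 'b \<Rightarrow> bool"
  assumes "simple_graph V1 E1" and "connected_graph V1 E1" and "card V1 \<ge> 2"
    and "simple_graph V2 E2" and "connected_graph V2 E2" and "card V2 \<ge> 2"
  shows "td_chromatic (ncorona_V V1 V2) (ncorona_E E1 V2 E2)
           \<le> td_chromatic V1 E1 + td_chromatic V2 E2"
proof -
  obtain c1 where c1: "td_coloring V1 E1 c1" "card (c1 ` V1) = td_chromatic V1 E1"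
    using td_chromatic_attained[OF td_coloring_exists[OF assms(1)
          connected_graph_no_isolated[OF assms(2,3)]]] by blast
  obtain c2 where c2: "td_coloring V2 E2 c2" "card (c2 ` V2) = td_chromatic V2 E2"
    using td_chromatic_attained[OF td_coloring_exists[OF assms(4)
          connected_graph_no_isolated[OF assms(5,6)]]] by blast
  have fin: "finite V1" "finite V2" using assms(1,4) by (auto simp: simple_graph_def)
  define M where "M = Suc (Max (c1 ` V1))"
  have "\<forall>v\<in>V1. c1 v < M" using fin(1) by (simp add: M_def le_imp_less_Suc)
  moreover have "proper_coloring V2 E2 c2" using c2(1) by (simp add: td_coloring_def)
  ultimately have "td_coloring (ncorona_V V1 V2) (ncorona_E E1 V2 E2) (ncorona_coloring c1 c2 M)"
    using ncorona_coloring_td assms(1) c1(1) by blast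
  then have "td_chromatic (ncorona_V V1 V2) (ncorona_E E1 V2 E2)
      \<le> card (ncorona_coloring c1 c2 M ` ncorona_V V1 V2)"
    by (rule td_chromatic_le)
  also have "\<dots> \<le> card (c1 ` V1) + card (c2 ` V2)"
    using fin by (rule card_ncorona_coloring_image)
  finally show ?thesis using c1(2) c2(2) by simp
qed

end
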